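(* Let $\alpha\in(2,4)$ and $\psi,\phi\in C_b(\mathbb{R})$. For $E,F\in\mathbb{R}$ and $\eta_1,\eta_2\in(0,1]$ write $z=E+i\eta_1$, $w=F+i\eta_2$. Then for every $u>0$, \[ \sup_{\eta_1,\eta_2\le1}\iint_{\mathbb{R}^2}|\psi(E)||\phi(F)|\Big|\operatorname{Im}\Big\{\frac{2u^2m(z)m'(z)}{1-u^2m^2(z)}\Big\}\operatorname{Im}\Big\{\frac{2u^2m(w)m'(w)}{1-u^2m^2(w)}\Big\}\Big|\,\mathrm{d}E\,\mathrm{d}F\le18^2\|\psi\|_\infty\|\phi\|_\infty\big(u^4\mathbf{1}_{u<\frac12}+\mathbf{1}_{u\ge\frac12}\big), \] and \[ \int_0^\infty\frac{1}{u^{1+\alpha}}\sup_{\eta_1,\eta_2\le1}\bigg\{\iint_{\mathbb{R}^2}|\psi(E)||\phi(F)|\Big|\operatorname{Im}\Big\{\frac{2u^2m(z)m'(z)}{1-u^2m^2(z)}\Big\}\operatorname{Im}\Big\{\frac{2u^2m(w)m'(w)}{1-u^2m^2(w)}\Big\}\Big|\,\mathrm{d}E\,\mathrm{d}F\bigg\}\mathrm{d}u\le\frac{18^2\,2^\alpha}{4-\alpha}\|\psi\|_\infty\|\phi\|_\infty . \]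
   Context: $m(z)=\frac{z-\sqrt{z^2-4}}{2}$ is the Stieltjes transform of the semicircle law on $[-2,2]$ (satisfying $m(z)=1/(z-m(z))$, $|m(z)|<1$ off the real line). $C_b(\mathbb{R})$ is the space of bounded continuous functions with sup norm $\|\cdot\|_\infty$. *)

theory Defs
  imports "HOL-Analysis.Analysis"
begin

text \<open>Stieltjes transform of the semicircle law: for z off [-2,2] the unique
  solution of m = 1/(z - m) with |m| < 1 (equivalently the branch of
  (z - sqrt(z^2-4))/2 with |m(z)| < 1).\<close>
definition msc :: "complex \<Rightarrow> complex" where
  "msc z = (THE m. m = 1 / (z - m) \<and> cmod m < 1)"

definition Gfun :: "real \<Rightarrow> complex \<Rightarrow> complex" where
  "Gfun u z = 2 * (complex_of_real u)^2 * msc z * deriv msc z /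
              (1 - (complex_of_real u)^2 * (msc z)^2)"

text \<open>The supremum over eta1, eta2 in (0,1] of the double integral
  (nonnegative integrand, so the Lebesgue nonnegative integral on R^2).\<close>
definition Ifun :: "(real \<Rightarrow>\<^sub>C real) \<Rightarrow> (real \<Rightarrow>\<^sub>C real) \<Rightarrow> real \<Rightarrow> ennreal" where
  "Ifun \<psi> \<phi> u = (SUP \<eta> \<in> {0<..1::real} \<times> {0<..1::real}.
      \<integral>\<^sup>+ p. ennreal (\<bar>\<psi> (fst p)\<bar> * \<bar>\<phi> (snd p)\<bar> *
         \<bar>Im (Gfun u (Complex (fst p) (fst \<eta>))) * Im (Gfun u (Complex (snd p) (snd \<eta>)))\<bar>)
      \<partial>(lborel :: (real \<times> real) measure))"

end

theory Submission
  imports Defs "HOL-Complex_Analysis.Complex_Analysis"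
begin

text \<open>
  Along the line \<open>z = E + i \<eta>\<close> write \<open>m = m(z)\<close>. From \<open>z = m + 1/m\<close> one gets
  \<open>m' = m^2 / (m^2 - 1)\<close> and the partial fraction decomposition
  \<open>2 u^2 m m' / (1 - u^2 m^2) = f(u) + f(-u)\<close> with \<open>f(c) = c m' / (1 - c m)\<close>. Now
  \<open>Im f(c)\<close> is minus the \<open>E\<close>-derivative of \<open>Im (Ln (1 - c m))\<close>, a function with values in an
  interval of length \<open>\<pi>\<close> whose derivative changes sign at most once; hence its total variation
  is at most \<open>2 \<pi>\<close>, and the \<open>E\<close>-integral of the absolute value is at most \<open>4 \<pi>\<close>. For small
  \<open>u\<close> one bounds instead \<open>|m m'| \<le> |d/dE |m|^2| / 2 + d/dE arg m\<close>: here \<open>|m|^2\<close> is unimodal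
  with values in \<open>[0, 1]\<close> and \<open>arg m\<close> is monotone with values in \<open>[-\<pi>, 0]\<close>, which gives
  \<open>2 u^2 (1 + \<pi>) / (1 - u^2) \<le> 18 u^2\<close> for \<open>u < 1/2\<close>. By Tonelli the double integral
  factorises, so it is at most \<open>\<parallel>\<psi>\<parallel> \<parallel>\<phi>\<parallel>\<close> times the square of the one-dimensional bound;
  integrating that square against \<open>u^(-1-\<alpha>)\<close> gives the second claim.
\<close>

section \<open>Complex identities\<close>

lemma Im_add_inverse: "Im (w + 1 / w) = Im w * (1 - 1 / (cmod w)^2)"
  by (simp add: Im_divide cmod_power2 field_simps)

lemma Re_add_inverse: "Re (w + 1 / w) = Re w * (1 + 1 / (cmod w)^2)"
  by (simp add: Re_divide cmod_power2 field_simps)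

lemma Re_div_sq_sub_one:
  fixes w :: complex
  shows "Re (w / (w^2 - 1)) = Re w * ((cmod w)^2 - 1) / (cmod (w^2 - 1))^2"
  unfolding cmod_power2 Re_divide by (simp add: power2_eq_square algebra_simps)

lemma Im_div_sq_sub_one:
  fixes w :: complex
  shows "Im (w / (w^2 - 1)) = - Im w * ((cmod w)^2 + 1) / (cmod (w^2 - 1))^2"
  unfolding cmod_power2 Im_divide by (simp add: power2_eq_square algebra_simps)

lemma Re_sq_div_sq_sub_one_less:
  fixes w :: complex
  assumes "cmod w < 1"
  shows "Re (w^2 / (w^2 - 1)) < 1"
proof -
  have "Re (w^2) < 1"
    using assms abs_Re_le_cmod[of "w^2"] abs_square_less_1[of "cmod w"] by (simp add: norm_power)
  then have "Re (1 / (w^2 - 1)) < 0"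
    by (simp add: Re_divide divide_neg_pos sum_power2_gt_zero_iff complex_eq_iff)
  moreover have "w^2 - 1 \<noteq> 0"
    using \<open>Re (w^2) < 1\<close> by auto
  then have "w^2 / (w^2 - 1) = 1 + 1 / (w^2 - 1)"
    by (simp add: field_simps)
  ultimately show ?thesis by simp
qed

lemma Im_mult_sq_div_sq_sub_one_div:
  fixes c :: real and w :: complex
  shows "Im (c * (w^2 / (w^2 - 1)) / (1 - c * w)) =
    c * Im w * (c * (cmod w)^2 * (1 + (cmod w)^2) - 2 * Re w) / ((cmod (w^2 - 1))^2 * (cmod (1 - c * w))^2)"
proof -
  define v where "v = (w^2 - 1) * (1 - c * w)"
  have "c * (w^2 / (w^2 - 1)) / (1 - c * w) = c * w^2 / v"
    by (simp add: v_def)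
  also have "\<dots> = c * w^2 * cnj v / (cmod v)^2"
    by (rule complex_div_cnj)
  finally have "Im (c * (w^2 / (w^2 - 1)) / (1 - c * w)) = Im (c * w^2 * cnj v) / (cmod v)^2"
    by (simp del: complex_cnj_mult)
  moreover have "Im (c * w^2 * cnj v) = c * Im w * (c * (cmod w)^2 * (1 + (cmod w)^2) - 2 * Re w)"
    unfolding v_def cmod_power2 by (simp add: power2_eq_square algebra_simps)
  ultimately show ?thesis
    by (simp add: v_def norm_mult power_mult_distrib)
qed

lemma Re_Im_sum_eq_norm_sq_mult_Re_div: "Re a * Re b + Im a * Im b = (cmod a)^2 * Re (b / a)"
  by (cases "a = 0") (auto simp: Re_divide cmod_power2 field_simps complex_eq_iff)

lemma partial_fraction_one_sub_sq:
  fixes x w q :: complex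
  assumes "1 - x * w \<noteq> 0" "1 + x * w \<noteq> 0"
  shows "2 * x^2 * w * q / (1 - x^2 * w^2) = x * q / (1 - x * w) + (- x) * q / (1 - (- x) * w)"
proof -
  have "1 - x^2 * w^2 = (1 - x * w) * (1 + x * w)"
    by (simp add: algebra_simps power2_eq_square)
  with assms show ?thesis
    by (simp add: field_simps power2_eq_square)
qed

lemma Im_Ln_neg:
  assumes "Im z < 0"
  shows "- pi < Im (Ln z)" "Im (Ln z) < 0"
proof -
  have "z \<noteq> 0"
    using assms by auto
  then show "- pi < Im (Ln z)" "Im (Ln z) < 0"
    using Im_Ln_pos_le[of z] mpi_less_Im_Ln[of z] Im_Ln_le_pi[of z] assms by auto
qed

section \<open>The Stieltjes transform of the semicircle law\<close>

lemma semicircle_root_unique: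
  fixes z m1 m2 :: complex
  assumes "m1^2 - z * m1 + 1 = 0" "cmod m1 < 1" "m2^2 - z * m2 + 1 = 0" "cmod m2 < 1"
  shows "m1 = m2"
proof (rule ccontr)
  assume "m1 \<noteq> m2"
  moreover have "(m1 - m2) * (m1 + m2 - z) = 0"
    using assms(1,3) by algebra
  ultimately have "z = m1 + m2"
    by simp
  then have "cmod m1 * cmod m2 = 1"
    using assms(1) by (simp add: norm_mult[symmetric] algebra_simps power2_eq_square)
  moreover have "cmod m1 * cmod m2 < 1"
    using assms(2,4) by (metis mult_strict_mono' mult_1 norm_ge_zero)
  ultimately show False
    by simp
qed

text \<open>The two roots have product 1, so if neither lies in the open unit disc both lie on
  the unit circle, are conjugate, and their sum \<open>z\<close> is real.\<close>
lemma semicircle_root_exists: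
  fixes z :: complex
  assumes "Im z \<noteq> 0"
  shows "\<exists>m. m^2 - z * m + 1 = 0 \<and> cmod m < 1"
proof (rule ccontr)
  assume no_root: "\<nexists>m. m^2 - z * m + 1 = 0 \<and> cmod m < 1"
  define r1 where "r1 = (z - csqrt (z^2 - 4)) / 2"
  define r2 where "r2 = (z + csqrt (z^2 - 4)) / 2"
  have sum: "r1 + r2 = z"
    by (simp add: r1_def r2_def field_simps)
  have "r1 * r2 = (z^2 - (csqrt (z^2 - 4))^2) / 4"
    unfolding r1_def r2_def by (simp add: field_simps power2_eq_square)
  then have prod: "r1 * r2 = 1"
    by simp
  have "r1^2 - z * r1 + 1 = 0" "r2^2 - z * r2 + 1 = 0"
    using sum prod by (auto simp: power2_eq_square algebra_simps)
  then have "1 \<le> cmod r1" "1 \<le> cmod r2"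
    using no_root by (auto simp: not_less)
  moreover have "cmod r1 * cmod r2 = 1"
    using prod by (metis norm_mult norm_one)
  ultimately have "cmod r1 = 1"
    by (smt (verit) mult_le_cancel_left1)
  have "r1 \<noteq> 0"
    using prod by auto
  then have "r2 = 1 / r1"
    using prod by (simp add: field_simps)
  also have "\<dots> = cnj r1"
    using \<open>cmod r1 = 1\<close> complex_div_cnj[of 1 r1] by simp
  finally show False
    using sum assms by auto
qed

lemma msc_eq_iff:
  assumes "Im z \<noteq> 0"
  shows "msc z = m \<longleftrightarrow> m^2 - z * m + 1 = 0 \<and> cmod m < 1"
proof -
  have "m = 1 / (z - m) \<longleftrightarrow> m^2 - z * m + 1 = 0" for m
  proof (cases "m = z")
    case True
    then show ?thesis
      using assms by (auto simp: power2_eq_square)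
  next
    case False
    then show ?thesis
      by (auto simp: field_simps power2_eq_square)
  qed
  then have msc_def': "msc z = (THE m. m^2 - z * m + 1 = 0 \<and> cmod m < 1)"
    by (simp add: msc_def)
  obtain m0 where m0: "m0^2 - z * m0 + 1 = 0" "cmod m0 < 1"
    using semicircle_root_exists[OF assms] by blast
  have "msc z = m0"
    unfolding msc_def' using m0 semicircle_root_unique[OF _ _ m0] by (intro the_equality) blast+
  with m0 show ?thesis
    using semicircle_root_unique[OF _ _ m0] by blast
qed

lemma
  assumes "Im z \<noteq> 0"
  shows msc_root: "(msc z)^2 - z * msc z + 1 = 0"
    and norm_msc_less_1: "cmod (msc z) < 1"
  using msc_eq_iff[OF assms, of "msc z"] by simp_all

lemma
  assumes "Im z \<noteq> 0"
  shows msc_nonzero: "msc z \<noteq> 0"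
    and msc_add_inverse: "msc z + 1 / msc z = z"
proof -
  show "msc z \<noteq> 0"
    using msc_root[OF assms] by auto
  then show "msc z + 1 / msc z = z"
    using msc_root[OF assms] by (simp add: field_simps power2_eq_square)
qed

lemma msc_sq_ne_1:
  assumes "Im z \<noteq> 0"
  shows "(msc z)^2 \<noteq> 1"
  using msc_add_inverse[OF assms] assms by (auto simp: power2_eq_1_iff)

lemma Im_msc_neg:
  assumes "Im z > 0"
  shows "Im (msc z) < 0"
proof -
  have "Im z = Im (msc z) * (1 - 1 / (cmod (msc z))^2)"
    using msc_add_inverse[of z] Im_add_inverse[of "msc z"] assms by simp
  moreover have "1 - 1 / (cmod (msc z))^2 < 0"
    using norm_msc_less_1[of z] msc_nonzero[of z] assms
    by (simp add: power_less_one_iff field_simps)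
  ultimately show ?thesis
    using assms by (simp add: zero_less_mult_iff)
qed

lemma msc_add_inverse_cancel:
  assumes "cmod w < 1" "Im w \<noteq> 0"
  shows "msc (w + 1 / w) = w"
proof -
  have "w \<noteq> 0" "(cmod w)^2 < 1"
    using assms abs_square_less_1[of "cmod w"] by auto
  then have "1 - 1 / (cmod w)^2 \<noteq> 0"
    by simp
  then have "Im (w + 1 / w) \<noteq> 0"
    using assms(2) by (simp only: Im_add_inverse) simp
  with \<open>w \<noteq> 0\<close> show ?thesis
    using assms(1) by (simp add: msc_eq_iff field_simps power2_eq_square)
qed

lemma has_field_derivative_msc:
  assumes "Im z \<noteq> 0"
  shows "(msc has_field_derivative (msc z)^2 / ((msc z)^2 - 1)) (at z)"
proof -
  define S where "S = {w. cmod w < 1 \<and> Im w \<noteq> 0}"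
  define m where "m = msc z"
  have "m \<noteq> 0" "m^2 \<noteq> 1" "m + 1 / m = z"
    using msc_nonzero msc_sq_ne_1 msc_add_inverse assms unfolding m_def by auto
  have "Im m \<noteq> 0"
    using Im_add_inverse[of m] \<open>m + 1 / m = z\<close> assms by auto
  then have "m \<in> S"
    using norm_msc_less_1[OF assms] unfolding S_def m_def by simp
  have "open S"
    unfolding S_def by (intro open_Collect_conj open_Collect_less open_Collect_neq continuous_intros)
  have cont: "continuous_on S (\<lambda>w. w + 1 / w)"
    unfolding S_def by (intro continuous_intros) auto
  have inv: "msc (w + 1 / w) = w" if "w \<in> S" for w
    using that unfolding S_def by (simp add: msc_add_inverse_cancel)
  have "((\<lambda>w. w + 1 / w) has_field_derivative 1 - 1 / m^2) (at m)"
    using \<open>m \<noteq> 0\<close> by (auto intro!: derivative_eq_intros simp: power2_eq_square)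
  moreover have "1 - 1 / m^2 \<noteq> 0"
    using \<open>m \<noteq> 0\<close> \<open>m^2 \<noteq> 1\<close> by (simp add: field_simps)
  ultimately have "(msc has_field_derivative inverse (1 - 1 / m^2)) (at z)"
    using has_field_derivative_inverse_strong_x[where g = msc and y = z,
        OF _ _ \<open>open S\<close> cont \<open>m \<in> S\<close>[unfolded m_def]] \<open>m + 1 / m = z\<close> inv
    unfolding m_def by blast
  moreover have "inverse (1 - 1 / m^2) = m^2 / (m^2 - 1)"
    using \<open>m \<noteq> 0\<close> \<open>m^2 \<noteq> 1\<close> by (simp add: field_simps)
  ultimately show ?thesis
    unfolding m_def by simp
qed

lemma deriv_msc:
  assumes "Im z \<noteq> 0"
  shows "deriv msc z = (msc z)^2 / ((msc z)^2 - 1)"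
  using has_field_derivative_msc[OF assms] by (rule DERIV_imp_deriv)

section \<open>Integrals over the real line\<close>

lemma nn_integral_lborel_le_of_Icc:
  fixes f :: "real \<Rightarrow> ennreal"
  assumes "f \<in> borel_measurable borel"
    and "\<And>a b. a < b \<Longrightarrow> (\<integral>\<^sup>+x. f x * indicator {a..b} x \<partial>lborel) \<le> C"
  shows "integral\<^sup>N lborel f \<le> C"
proof -
  define g where "g n x = f x * indicator {- real n - 1..real n + 1} x" for n :: nat and x
  have "incseq g"
    unfolding g_def incseq_def le_fun_def by (auto intro!: mult_left_mono simp: indicator_def)
  moreover have "g n \<in> borel_measurable lborel" for n
    unfolding g_def using assms(1) by measurable
  moreover have "(SUP n. g n x) = f x" for x
  proof (rule antisym)
    show "(SUP n. g n x) \<le> f x"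
      unfolding g_def by (rule SUP_least) (auto simp: indicator_def)
    obtain n :: nat where "\<bar>x\<bar> \<le> real n"
      using real_arch_simple by blast
    then have "g n x = f x"
      unfolding g_def by (auto simp: indicator_def)
    then show "f x \<le> (SUP n. g n x)"
      by (metis SUP_upper UNIV_I)
  qed
  ultimately have "integral\<^sup>N lborel f = (SUP n. integral\<^sup>N lborel (g n))"
    using nn_integral_monotone_convergence_SUP[of g lborel] by simp
  also have "\<dots> \<le> C"
    unfolding g_def by (intro SUP_least assms(2)) simp
  finally show ?thesis .
qed

lemma nn_integral_abs_deriv_Icc:
  fixes F F' :: "real \<Rightarrow> real"
  assumes der: "\<And>x. (F has_real_derivative F' x) (at x)" and cont: "continuous_on UNIV F'"
    and "a \<le> b" and nonneg: "\<And>x. x \<in> {a<..<b} \<Longrightarrow> 0 \<le> F' x"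
  shows "(\<integral>\<^sup>+x. ennreal \<bar>F' x\<bar> * indicator {a..b} x \<partial>lborel) = ennreal (F b - F a)"
proof (cases "a = b")
  case True
  have "AE x in lborel. ennreal \<bar>F' x\<bar> * indicator {a..b} x = 0"
    using AE_lborel_singleton[of a] by eventually_elim (use True in auto)
  with True show ?thesis
    by (simp add: nn_integral_0_iff_AE)
next
  case False
  with \<open>a \<le> b\<close> have "closure {a<..<b} = {a..b}"
    by simp
  moreover have "closed {x. 0 \<le> F' x}"
    using cont by (intro closed_Collect_le continuous_intros) auto
  ultimately have "{a..b} \<subseteq> {x. 0 \<le> F' x}"
    using nonneg by (metis closure_minimal mem_Collect_eq subsetI)
  then have "(\<integral>\<^sup>+x. ennreal \<bar>F' x\<bar> * indicator {a..b} x \<partial>lborel)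
      = (\<integral>\<^sup>+x. ennreal (F' x) * indicator {a..b} x \<partial>lborel)"
    by (intro nn_integral_cong) (auto simp: indicator_def)
  also have "\<dots> = ennreal (F b - F a)"
    using der \<open>{a..b} \<subseteq> _\<close> \<open>a \<le> b\<close> borel_measurable_continuous_onI[OF cont]
    by (intro nn_integral_FTC_Icc) auto
  finally show ?thesis .
qed

lemma nn_integral_abs_deriv_le_mono:
  fixes F F' :: "real \<Rightarrow> real"
  assumes der: "\<And>x. (F has_real_derivative F' x) (at x)" and cont: "continuous_on UNIV F'"
    and bounds: "\<And>x. A \<le> F x" "\<And>x. F x \<le> B"
    and nonneg: "\<And>x. 0 \<le> F' x"
  shows "(\<integral>\<^sup>+x. ennreal \<bar>F' x\<bar> \<partial>lborel) \<le> ennreal (B - A)"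
proof (rule nn_integral_lborel_le_of_Icc)
  have [measurable]: "F' \<in> borel_measurable borel"
    using cont by (rule borel_measurable_continuous_onI)
  then show "(\<lambda>x. ennreal \<bar>F' x\<bar>) \<in> borel_measurable borel"
    by measurable
  fix a b :: real
  assume "a < b"
  then have "(\<integral>\<^sup>+x. ennreal \<bar>F' x\<bar> * indicator {a..b} x \<partial>lborel) = ennreal (F b - F a)"
    using nonneg by (intro nn_integral_abs_deriv_Icc[OF der cont]) auto
  also have "\<dots> \<le> ennreal (B - A)"
    using bounds[of a] bounds[of b] by (intro ennreal_leI) auto
  finally show "(\<integral>\<^sup>+x. ennreal \<bar>F' x\<bar> * indicator {a..b} x \<partial>lborel) \<le> ennreal (B - A)" .
qed

lemma sign_change_point:
  fixes g :: "real \<Rightarrow> real"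
  assumes "a < b" and sign_change: "\<And>x y. x < y \<Longrightarrow> 0 < g y \<Longrightarrow> 0 \<le> g x"
  obtains c where "a \<le> c" "c \<le> b" "\<And>x. x \<in> {a<..<c} \<Longrightarrow> 0 \<le> g x" "\<And>y. y \<in> {c<..<b} \<Longrightarrow> g y \<le> 0"
proof
  define S where "S = {y \<in> {a..b}. g y < 0} \<union> {b}"
  have "bdd_below S" "S \<noteq> {}"
    unfolding S_def by (auto intro: bdd_belowI[of _ a])
  then show "Inf S \<le> b" "a \<le> Inf S"
    using \<open>a < b\<close> by (auto intro!: cInf_lower cInf_greatest simp: S_def)
  show "0 \<le> g x" if x: "x \<in> {a<..<Inf S}" for x
  proof (rule ccontr)
    assume "\<not> 0 \<le> g x"
    then have "x \<in> S"
      using x \<open>Inf S \<le> b\<close> unfolding S_def by auto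
    then show False
      using x cInf_lower[OF _ \<open>bdd_below S\<close>] by force
  qed
  show "g y \<le> 0" if y: "y \<in> {Inf S<..<b}" for y
  proof -
    obtain s where "s \<in> S" "s < y"
      using y cInf_less_iff[OF \<open>S \<noteq> {}\<close> \<open>bdd_below S\<close>] by auto
    then have "g s < 0"
      using y unfolding S_def by auto
    then show ?thesis
      using sign_change[OF \<open>s < y\<close>] by force
  qed
qed

lemma nn_integral_abs_deriv_le_unimodal:
  fixes F F' :: "real \<Rightarrow> real"
  assumes der: "\<And>x. (F has_real_derivative F' x) (at x)" and cont: "continuous_on UNIV F'"
    and bounds: "\<And>x. A \<le> F x" "\<And>x. F x \<le> B"
    and sign_change: "\<And>x y. x < y \<Longrightarrow> 0 < F' y \<Longrightarrow> 0 \<le> F' x"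
  shows "(\<integral>\<^sup>+x. ennreal \<bar>F' x\<bar> \<partial>lborel) \<le> ennreal (2 * (B - A))"
proof (rule nn_integral_lborel_le_of_Icc)
  have [measurable]: "F' \<in> borel_measurable borel"
    using cont by (rule borel_measurable_continuous_onI)
  then show "(\<lambda>x. ennreal \<bar>F' x\<bar>) \<in> borel_measurable borel"
    by measurable
  fix a b :: real
  assume "a < b"
  then obtain c where "a \<le> c" "c \<le> b" and left: "\<And>x. x \<in> {a<..<c} \<Longrightarrow> 0 \<le> F' x"
    and right: "\<And>y. y \<in> {c<..<b} \<Longrightarrow> 0 \<le> - F' y"
    using sign_change_point[of a b F'] sign_change by (metis neg_0_le_iff_le)
  have der': "((\<lambda>x. - F x) has_real_derivative - F' x) (at x)" for x
    using der by (rule DERIV_minus)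
  have "(\<integral>\<^sup>+x. ennreal \<bar>F' x\<bar> * indicator {a..b} x \<partial>lborel)
      \<le> (\<integral>\<^sup>+x. ennreal \<bar>F' x\<bar> * indicator {a..c} x + ennreal \<bar>- F' x\<bar> * indicator {c..b} x \<partial>lborel)"
    by (intro nn_integral_mono) (auto simp: indicator_def)
  also have "\<dots> = (\<integral>\<^sup>+x. ennreal \<bar>F' x\<bar> * indicator {a..c} x \<partial>lborel)
      + (\<integral>\<^sup>+x. ennreal \<bar>- F' x\<bar> * indicator {c..b} x \<partial>lborel)"
    by (rule nn_integral_add) measurable
  also have "\<dots> = ennreal (F c - F a) + ennreal (- F b - - F c)"
    using nn_integral_abs_deriv_Icc[OF der cont \<open>a \<le> c\<close> left]
      nn_integral_abs_deriv_Icc[OF der' continuous_on_minus[OF cont] \<open>c \<le> b\<close> right]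
    by (simp only:)
  also have "\<dots> \<le> ennreal (B - A) + ennreal (B - A)"
    using bounds[of a] bounds[of b] bounds[of c] by (intro add_mono ennreal_leI) auto
  also have "\<dots> = ennreal (2 * (B - A))"
    using bounds[of a] by (simp add: ennreal_plus[symmetric] del: ennreal_plus)
  finally show "(\<integral>\<^sup>+x. ennreal \<bar>F' x\<bar> * indicator {a..b} x \<partial>lborel) \<le> ennreal (2 * (B - A))" .
qed

lemma nn_integral_lborel_pair_mult:
  fixes f :: "'a::euclidean_space \<Rightarrow> ennreal" and g :: "'b::euclidean_space \<Rightarrow> ennreal"
  assumes [measurable]: "f \<in> borel_measurable borel" "g \<in> borel_measurable borel"
  shows "(\<integral>\<^sup>+p. f (fst p) * g (snd p) \<partial>lborel) = (\<integral>\<^sup>+x. f x \<partial>lborel) * (\<integral>\<^sup>+y. g y \<partial>lborel)"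
proof -
  have "(\<integral>\<^sup>+p. f (fst p) * g (snd p) \<partial>lborel) = (\<integral>\<^sup>+p. f (fst p) * g (snd p) \<partial>(lborel \<Otimes>\<^sub>M lborel))"
    by (simp only: lborel_prod)
  also have "\<dots> = (\<integral>\<^sup>+x. \<integral>\<^sup>+y. f x * g y \<partial>lborel \<partial>lborel)"
    using lborel.nn_integral_fst[of "\<lambda>p. f (fst p) * g (snd p)" lborel] by simp
  also have "\<dots> = (\<integral>\<^sup>+x. f x * (\<integral>\<^sup>+y. g y \<partial>lborel) \<partial>lborel)"
    by (simp add: nn_integral_cmult)
  also have "\<dots> = (\<integral>\<^sup>+x. f x \<partial>lborel) * (\<integral>\<^sup>+y. g y \<partial>lborel)"
    by (simp add: nn_integral_multc)
  finally show ?thesis .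
qed

lemma nn_integral_bcontfun_mult_le:
  fixes \<psi> :: "real \<Rightarrow>\<^sub>C real" and h :: "real \<Rightarrow> real"
  assumes "h \<in> borel_measurable borel"
  shows "(\<integral>\<^sup>+x. ennreal (\<bar>\<psi> x\<bar> * \<bar>h x\<bar>) \<partial>lborel) \<le> ennreal (norm \<psi>) * (\<integral>\<^sup>+x. ennreal \<bar>h x\<bar> \<partial>lborel)"
proof -
  have "(\<integral>\<^sup>+x. ennreal (\<bar>\<psi> x\<bar> * \<bar>h x\<bar>) \<partial>lborel) \<le> (\<integral>\<^sup>+x. ennreal (norm \<psi>) * ennreal \<bar>h x\<bar> \<partial>lborel)"
    using norm_bounded[of \<psi>] by (intro nn_integral_mono) (simp add: ennreal_mult[symmetric] mult_right_mono)
  also have "\<dots> = ennreal (norm \<psi>) * (\<integral>\<^sup>+x. ennreal \<bar>h x\<bar> \<partial>lborel)"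
    using assms by (intro nn_integral_cmult) measurable
  finally show ?thesis .
qed

lemma nn_integral_powr_Icc_0:
  assumes "-1 < p" "0 \<le> b"
  shows "(\<integral>\<^sup>+x. ennreal (indicator {0..b} x * x powr p) \<partial>lborel) = ennreal (b powr (p + 1) / (p + 1))"
proof (rule nn_integral_has_integral_lborel)
  have "(\<lambda>x. indicator {0..b} x * x powr p) = (\<lambda>x. if x \<in> {0..b} then x powr p else 0)"
    by (auto simp: indicator_def)
  then show "((\<lambda>x. indicator {0..b} x * x powr p) has_integral b powr (p + 1) / (p + 1)) UNIV"
    using has_integral_powr_from_0[OF assms] by (simp only: has_integral_restrict_UNIV)
qed (auto simp: indicator_def)

lemma nn_integral_powr_atLeast:
  assumes "p < -1" "0 < a"
  shows "(\<integral>\<^sup>+x. ennreal (indicator {a..} x * x powr p) \<partial>lborel) = ennreal (- (a powr (p + 1)) / (p + 1))"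
proof (rule nn_integral_has_integral_lborel)
  have "(\<lambda>x. indicator {a..} x * x powr p) = (\<lambda>x. if x \<in> {a..} then x powr p else 0)"
    by (auto simp: indicator_def)
  then show "((\<lambda>x. indicator {a..} x * x powr p) has_integral - (a powr (p + 1)) / (p + 1)) UNIV"
    using has_integral_powr_to_inf[OF assms] by (simp only: has_integral_restrict_UNIV)
qed (auto simp: indicator_def)

section \<open>The Stieltjes transform along a horizontal line\<close>

lemma has_vector_derivative_horizontal:
  assumes "(h has_field_derivative h') (at (Complex t \<eta>))"
  shows "((\<lambda>s. h (Complex s \<eta>)) has_vector_derivative h') (at t)"
proof -
  have line: "Complex s \<eta> = of_real s + \<i> * of_real \<eta>" for s
    by (simp add: complex_eq_iff)
  have "((\<lambda>w. h (w + \<i> * of_real \<eta>)) has_field_derivative h' * 1) (at (of_real t))"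
    by (rule DERIV_chain2[where f = h]) (use assms line in \<open>auto intro!: derivative_eq_intros\<close>)
  then have "((\<lambda>s. h (of_real s + \<i> * of_real \<eta>)) has_vector_derivative h') (at t)"
    using has_vector_derivative_real_field by fastforce
  then show ?thesis
    by (simp only: line)
qed

lemma
  assumes "(h has_field_derivative h') (at (Complex t \<eta>))"
  shows has_real_derivative_Re_horizontal: "((\<lambda>s. Re (h (Complex s \<eta>))) has_real_derivative Re h') (at t)"
    and has_real_derivative_Im_horizontal: "((\<lambda>s. Im (h (Complex s \<eta>))) has_real_derivative Im h') (at t)"
  using has_vector_derivative_horizontal[OF assms] by (simp_all add: has_vector_derivative_complex_iff)

locale semicircle_line =
  fixes \<eta> :: real
  assumes eta_pos: "0 < \<eta>"
begin

abbreviation m :: "real \<Rightarrow> complex" where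
  "m t \<equiv> msc (Complex t \<eta>)"

abbreviation m' :: "real \<Rightarrow> complex" where
  "m' t \<equiv> (m t)^2 / ((m t)^2 - 1)"

abbreviation \<rho> :: "real \<Rightarrow> real" where
  "\<rho> t \<equiv> (cmod (m t))^2"

lemma Im_Complex_pos: "0 < Im (Complex t \<eta>)"
  using eta_pos by simp

lemma Im_Complex_ne_0: "Im (Complex t \<eta>) \<noteq> 0"
  using eta_pos by simp

lemma Im_m_neg: "Im (m t) < 0"
  using Im_msc_neg[OF Im_Complex_pos] .

lemma norm_m_less_1: "cmod (m t) < 1"
  using norm_msc_less_1 Im_Complex_pos by simp

lemma m_nonzero: "m t \<noteq> 0"
  using Im_m_neg[of t] by auto

lemma m_sq_ne_1: "(m t)^2 \<noteq> 1"
  using msc_sq_ne_1 Im_Complex_pos by simp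

lemma \<rho>_pos: "0 < \<rho> t"
  using m_nonzero by simp

lemma \<rho>_less_1: "\<rho> t < 1"
  using norm_m_less_1[of t] abs_square_less_1[of "cmod (m t)"] by simp

lemma Re_m_mult_eq: "Re (m t) * (1 + 1 / \<rho> t) = t"
proof -
  have "t = Re (m t + 1 / m t)"
    using msc_add_inverse[OF Im_Complex_ne_0] by simp
  then show ?thesis
    by (simp only: Re_add_inverse)
qed

lemma t_sub_Re_m: "t - Re (m t) = Re (m t) / \<rho> t"
proof -
  have "Re (m t) * (1 + 1 / \<rho> t) - Re (m t) = Re (m t) / \<rho> t"
    by (simp add: algebra_simps)
  then show ?thesis
    by (simp only: Re_m_mult_eq)
qed

lemma
  shows Re_m_nonneg_iff: "0 \<le> Re (m t) \<longleftrightarrow> 0 \<le> t"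
    and Re_m_nonpos_iff: "Re (m t) \<le> 0 \<longleftrightarrow> t \<le> 0"
proof -
  have "0 < 1 + 1 / \<rho> t"
    using \<rho>_pos[of t] by (simp add: add_pos_pos)
  then have "0 \<le> Re (m t) \<longleftrightarrow> 0 \<le> Re (m t) * (1 + 1 / \<rho> t)"
    and "Re (m t) \<le> 0 \<longleftrightarrow> Re (m t) * (1 + 1 / \<rho> t) \<le> 0"
    by (simp_all add: zero_le_mult_iff mult_le_0_iff)
  then show "0 \<le> Re (m t) \<longleftrightarrow> 0 \<le> t" "Re (m t) \<le> 0 \<longleftrightarrow> t \<le> 0"
    by (simp_all only: Re_m_mult_eq)
qed

lemma has_field_derivative_m: "(msc has_field_derivative m' t) (at (Complex t \<eta>))"
  using has_field_derivative_msc Im_Complex_pos by simp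

lemma deriv_m: "deriv msc (Complex t \<eta>) = m' t"
  using deriv_msc Im_Complex_pos by simp

lemma continuous_on_m: "continuous_on UNIV m"
  using has_vector_derivative_horizontal[OF has_field_derivative_m]
  by (intro continuous_at_imp_continuous_on ballI has_vector_derivative_continuous) blast

lemma m'_div_m: "m' t / m t = m t / ((m t)^2 - 1)"
proof -
  have "w^2 / (w^2 - 1) / w = w / (w^2 - 1)" if "w \<noteq> 0" for w :: complex
    using that by (simp add: power2_eq_square)
  then show ?thesis
    using m_nonzero by blast
qed

lemma \<rho>_has_real_derivative: "(\<rho> has_real_derivative 2 * \<rho> t * Re (m' t / m t)) (at t)"
proof -
  have "\<rho> = (\<lambda>s. Re (m s) * Re (m s) + Im (m s) * Im (m s))"
    by (intro ext) (simp add: cmod_power2[unfolded power2_eq_square] power2_eq_square)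
  moreover have "((\<lambda>s. Re (m s) * Re (m s) + Im (m s) * Im (m s)) has_real_derivative
      2 * (Re (m t) * Re (m' t) + Im (m t) * Im (m' t))) (at t)"
    using DERIV_add[OF DERIV_mult DERIV_mult, OF has_real_derivative_Re_horizontal
        has_real_derivative_Re_horizontal has_real_derivative_Im_horizontal
        has_real_derivative_Im_horizontal, OF has_field_derivative_m has_field_derivative_m
        has_field_derivative_m has_field_derivative_m]
    by (simp add: algebra_simps)
  ultimately show ?thesis
    by (simp add: Re_Im_sum_eq_norm_sq_mult_Re_div mult.assoc)
qed

lemma Im_m'_div_m_pos: "0 < Im (m' t / m t)"
  unfolding m'_div_m Im_div_sq_sub_one using Im_m_neg[of t] m_sq_ne_1[of t]
  by (intro divide_pos_pos mult_pos_pos add_nonneg_pos) auto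

lemma Re_m'_div_m_eq: "Re (m' t / m t) = Re (m t) * (\<rho> t - 1) / (cmod ((m t)^2 - 1))^2"
  unfolding m'_div_m Re_div_sq_sub_one ..

lemma
  shows Re_m'_div_m_nonneg: "t \<le> 0 \<Longrightarrow> 0 \<le> Re (m' t / m t)"
    and Re_m'_div_m_nonpos: "0 \<le> t \<Longrightarrow> Re (m' t / m t) \<le> 0"
  unfolding Re_m'_div_m_eq using \<rho>_less_1[of t] Re_m_nonpos_iff[of t] Re_m_nonneg_iff[of t]
  by (simp_all add: mult_nonpos_nonpos divide_nonpos_nonneg mult_nonneg_nonpos)

lemma nn_integral_Im_m'_div_m_le: "(\<integral>\<^sup>+t. ennreal \<bar>Im (m' t / m t)\<bar> \<partial>lborel) \<le> ennreal pi"
proof -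
  have "m t \<notin> \<real>\<^sub>\<le>\<^sub>0" for t
    using Im_m_neg[of t] by (auto simp: complex_nonpos_Reals_iff)
  then have "((\<lambda>t. Im (Ln (m t))) has_real_derivative Im (m' t / m t)) (at t)" for t
    using has_real_derivative_Im_horizontal[OF DERIV_chain2[OF has_field_derivative_Ln has_field_derivative_m]]
    by (simp add: field_simps)
  moreover have "continuous_on UNIV (\<lambda>t. Im (m' t / m t))"
    using m_nonzero m_sq_ne_1 by (intro continuous_intros continuous_on_m) auto
  ultimately have "(\<integral>\<^sup>+t. ennreal \<bar>Im (m' t / m t)\<bar> \<partial>lborel) \<le> ennreal (0 - - pi)"
    using Im_Ln_neg[OF Im_m_neg] Im_m'_div_m_pos
    by (intro nn_integral_abs_deriv_le_mono) (auto intro: less_imp_le)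
  then show ?thesis
    by simp
qed

lemma norm_m_mult_m'_le: "cmod (m t * m' t) \<le> \<bar>\<rho> t * Re (m' t / m t)\<bar> + \<bar>Im (m' t / m t)\<bar>"
proof -
  have "w * x = w^2 * (x / w)" if "w \<noteq> 0" for w x :: complex
    using that by (simp add: power2_eq_square)
  then have "cmod (m t * m' t) = \<rho> t * cmod (m' t / m t)"
    using m_nonzero[of t] by (metis norm_mult norm_power)
  also have "\<dots> \<le> \<rho> t * (\<bar>Re (m' t / m t)\<bar> + \<bar>Im (m' t / m t)\<bar>)"
    by (rule mult_left_mono[OF cmod_le]) simp
  also have "\<dots> \<le> \<bar>\<rho> t * Re (m' t / m t)\<bar> + \<bar>Im (m' t / m t)\<bar>"
  proof -
    have "\<rho> t * \<bar>Im (m' t / m t)\<bar> \<le> \<bar>Im (m' t / m t)\<bar>"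
      using \<rho>_less_1[of t] by (intro mult_left_le_one_le) auto
    then show ?thesis
      by (simp add: abs_mult distrib_left)
  qed
  finally show ?thesis .
qed

lemma Gfun_eq: "Gfun u (Complex t \<eta>) = 2 * (of_real u)^2 * m t * m' t / (1 - (of_real u)^2 * (m t)^2)"
  unfolding Gfun_def deriv_m ..

lemma one_sub_mult_m_nonzero: "1 - of_real c * m t \<noteq> 0"
proof
  assume eq: "1 - of_real c * m t = 0"
  have "Im (1 - of_real c * m t) = Im 0"
    by (simp only: eq)
  then have "c * Im (m t) = 0"
    by simp
  then have "c = 0"
    using Im_m_neg[of t] by simp
  with eq show False
    by simp
qed

lemma one_add_mult_m_nonzero: "1 + of_real c * m t \<noteq> 0"
  using one_sub_mult_m_nonzero[of "- c" t] by simp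

lemma Gfun_eq_sum:
  "Gfun u (Complex t \<eta>) = of_real u * m' t / (1 - of_real u * m t) + of_real (- u) * m' t / (1 - of_real (- u) * m t)"
  unfolding Gfun_eq of_real_minus
  by (rule partial_fraction_one_sub_sq[OF one_sub_mult_m_nonzero one_add_mult_m_nonzero])

lemma continuous_on_Im_Gfun: "continuous_on UNIV (\<lambda>t. Im (Gfun u (Complex t \<eta>)))"
  unfolding Gfun_eq_sum using m_sq_ne_1 one_sub_mult_m_nonzero one_add_mult_m_nonzero
  by (intro continuous_intros continuous_on_m) auto

lemma nn_integral_abs_\<rho>_mult_Re_le: "(\<integral>\<^sup>+t. ennreal \<bar>\<rho> t * Re (m' t / m t)\<bar> \<partial>lborel) \<le> 1"
proof -
  have "(\<integral>\<^sup>+t. ennreal \<bar>\<rho> t * Re (m' t / m t)\<bar> \<partial>lborel) \<le> ennreal (2 * (1 / 2 - 0))"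
  proof (rule nn_integral_abs_deriv_le_unimodal)
    show "((\<lambda>t. \<rho> t / 2) has_real_derivative \<rho> t * Re (m' t / m t)) (at t)" for t
      using DERIV_cdivide[OF \<rho>_has_real_derivative[of t], of 2] by simp
    show "continuous_on UNIV (\<lambda>t. \<rho> t * Re (m' t / m t))"
      using m_nonzero m_sq_ne_1 by (intro continuous_intros continuous_on_m) auto
    show "0 \<le> \<rho> t / 2" "\<rho> t / 2 \<le> 1 / 2" for t
      using \<rho>_less_1[of t] by auto
    show "0 \<le> \<rho> x * Re (m' x / m x)" if "x < y" "0 < \<rho> y * Re (m' y / m y)" for x y
    proof -
      have "y < 0"
        using that(2) Re_m'_div_m_nonpos[of y] \<rho>_pos[of y] by (force simp: zero_less_mult_iff)
      then show ?thesis
        using \<open>x < y\<close> Re_m'_div_m_nonneg[of x] by simp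
    qed
  qed
  then show ?thesis
    by simp
qed

lemma abs_Im_Gfun_le:
  assumes "\<bar>u\<bar> < 1"
  shows "\<bar>Im (Gfun u (Complex t \<eta>))\<bar> \<le> 2 * u^2 / (1 - u^2) * (\<bar>\<rho> t * Re (m' t / m t)\<bar> + \<bar>Im (m' t / m t)\<bar>)"
proof -
  have "u^2 < 1"
    using assms abs_square_less_1 by blast
  have "cmod ((of_real u)^2 * (m t)^2) \<le> u^2"
    using \<rho>_less_1[of t] by (simp add: norm_mult norm_power mult_left_le)
  then have denom: "1 - u^2 \<le> cmod (1 - (of_real u)^2 * (m t)^2)"
    by (smt (verit) norm_one norm_triangle_ineq2)
  have "\<bar>Im (Gfun u (Complex t \<eta>))\<bar> \<le> cmod (Gfun u (Complex t \<eta>))"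
    by (rule abs_Im_le_cmod)
  also have "\<dots> = 2 * u^2 * cmod (m t * m' t) / cmod (1 - (of_real u)^2 * (m t)^2)"
    unfolding Gfun_eq by (simp add: norm_mult norm_divide norm_power mult.assoc)
  also have "\<dots> \<le> 2 * u^2 * cmod (m t * m' t) / (1 - u^2)"
    using denom \<open>u^2 < 1\<close> by (intro divide_left_mono) (auto intro!: mult_pos_pos)
  also have "\<dots> \<le> 2 * u^2 / (1 - u^2) * (\<bar>\<rho> t * Re (m' t / m t)\<bar> + \<bar>Im (m' t / m t)\<bar>)"
    using norm_m_mult_m'_le[of t] \<open>u^2 < 1\<close> by (simp add: divide_right_mono mult_left_mono)
  finally show ?thesis .
qed

lemma nn_integral_Im_Gfun_le_small:
  assumes "\<bar>u\<bar> < 1"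
  shows "(\<integral>\<^sup>+t. ennreal \<bar>Im (Gfun u (Complex t \<eta>))\<bar> \<partial>lborel) \<le> ennreal (2 * u^2 / (1 - u^2) * (1 + pi))"
proof -
  define C where "C = 2 * u^2 / (1 - u^2)"
  define f where "f t = \<bar>\<rho> t * Re (m' t / m t)\<bar>" for t
  define g where "g t = \<bar>Im (m' t / m t)\<bar>" for t
  have "0 \<le> C"
    using assms abs_square_less_1[of u] unfolding C_def by simp
  have [measurable]: "f \<in> borel_measurable borel" "g \<in> borel_measurable borel"
    unfolding f_def[abs_def] g_def[abs_def] using m_nonzero m_sq_ne_1
    by (intro borel_measurable_continuous_onI continuous_intros continuous_on_m; simp)+
  have "ennreal \<bar>Im (Gfun u (Complex t \<eta>))\<bar> \<le> ennreal C * ennreal (f t) + ennreal C * ennreal (g t)" for t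
  proof -
    have "ennreal \<bar>Im (Gfun u (Complex t \<eta>))\<bar> \<le> ennreal (C * f t + C * g t)"
      using abs_Im_Gfun_le[OF assms, of t] unfolding C_def f_def g_def by (intro ennreal_leI) (simp add: distrib_left)
    also have "\<dots> = ennreal C * ennreal (f t) + ennreal C * ennreal (g t)"
      using \<open>0 \<le> C\<close> by (simp add: f_def g_def ennreal_mult)
    finally show ?thesis .
  qed
  then have "(\<integral>\<^sup>+t. ennreal \<bar>Im (Gfun u (Complex t \<eta>))\<bar> \<partial>lborel)
      \<le> (\<integral>\<^sup>+t. ennreal C * ennreal (f t) + ennreal C * ennreal (g t) \<partial>lborel)"
    by (rule nn_integral_mono)
  also have "\<dots> = ennreal C * (\<integral>\<^sup>+t. ennreal (f t) \<partial>lborel) + ennreal C * (\<integral>\<^sup>+t. ennreal (g t) \<partial>lborel)"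
    by (simp add: nn_integral_add nn_integral_cmult)
  also have "\<dots> \<le> ennreal C * 1 + ennreal C * ennreal pi"
    unfolding f_def g_def using nn_integral_abs_\<rho>_mult_Re_le nn_integral_Im_m'_div_m_le
    by (intro add_mono mult_left_mono) auto
  also have "\<dots> = ennreal (C * (1 + pi))"
    using \<open>0 \<le> C\<close> by (simp add: ennreal_mult[symmetric] ennreal_plus[symmetric] distrib_left del: ennreal_plus)
  finally show ?thesis
    unfolding C_def .
qed

text \<open>The derivative of \<open>t \<mapsto> Im (Ln (1 - c m(t)))\<close> has the sign of \<open>c \<kappa> c t\<close>.\<close>
definition \<kappa> :: "real \<Rightarrow> real \<Rightarrow> real" where
  "\<kappa> c t = c * (1 + \<rho> t) - 2 * (t - Re (m t))"

lemma Im_log_deriv_eq: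
  "Im (of_real c * m' t / (1 - of_real c * m t)) =
    c * Im (m t) * \<rho> t * \<kappa> c t / ((cmod ((m t)^2 - 1))^2 * (cmod (1 - of_real c * m t))^2)"
proof -
  have "c * \<rho> t * (1 + \<rho> t) - 2 * Re (m t) = \<rho> t * \<kappa> c t"
    unfolding \<kappa>_def t_sub_Re_m using \<rho>_pos[of t] by (simp add: field_simps)
  then show ?thesis
    using Im_mult_sq_div_sq_sub_one_div[of c "m t"] by (simp add: mult.assoc)
qed

lemma \<kappa>_has_real_derivative:
  "(\<kappa> c has_real_derivative c * (2 * \<rho> t * Re (m' t / m t)) - 2 * (1 - Re (m' t))) (at t)"
proof -
  have "((\<lambda>s. c * (1 + \<rho> s) - 2 * (s - Re (m s))) has_real_derivative
      c * (0 + 2 * \<rho> t * Re (m' t / m t)) - 2 * (1 - Re (m' t))) (at t)"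
    by (intro DERIV_diff DERIV_cmult DERIV_add DERIV_const DERIV_ident \<rho>_has_real_derivative
        has_real_derivative_Re_horizontal[OF has_field_derivative_m])
  then show ?thesis
    by (simp add: \<kappa>_def[abs_def])
qed

lemma \<kappa>_deriv_neg:
  assumes "0 \<le> c * t"
  shows "c * (2 * \<rho> t * Re (m' t / m t)) - 2 * (1 - Re (m' t)) < 0"
proof -
  have "c * Re (m' t / m t) \<le> 0"
    using assms Re_m'_div_m_nonneg[of t] Re_m'_div_m_nonpos[of t]
    by (cases "0 \<le> c") (auto simp: zero_le_mult_iff mult_le_0_iff)
  moreover have "Re (m' t) < 1"
    using Re_sq_div_sq_sub_one_less[OF norm_m_less_1] .
  ultimately show ?thesis
    using \<rho>_pos[of t] by (smt (verit) mult_nonneg_nonpos mult.left_commute)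
qed

lemma
  shows \<kappa>_pos: "0 < c \<Longrightarrow> t \<le> 0 \<Longrightarrow> 0 < \<kappa> c t"
    and \<kappa>_neg: "c < 0 \<Longrightarrow> 0 \<le> t \<Longrightarrow> \<kappa> c t < 0"
proof -
  have "\<kappa> c t = c * (1 + \<rho> t) - 2 * (Re (m t) / \<rho> t)"
    unfolding \<kappa>_def t_sub_Re_m ..
  moreover have "0 < 1 + \<rho> t"
    using \<rho>_pos[of t] by linarith
  ultimately show "0 < c \<Longrightarrow> t \<le> 0 \<Longrightarrow> 0 < \<kappa> c t" "c < 0 \<Longrightarrow> 0 \<le> t \<Longrightarrow> \<kappa> c t < 0"
    using \<rho>_pos[of t] Re_m_nonneg_iff[of t] Re_m_nonpos_iff[of t]
    by (smt (verit) divide_nonneg_pos divide_nonpos_pos mult_pos_pos mult_neg_pos)+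
qed

text \<open>\<open>\<kappa> c\<close> is decreasing wherever \<open>c t \<ge> 0\<close>, and has the sign of \<open>c\<close> elsewhere.\<close>
lemma \<kappa>_sign_change:
  assumes "c \<noteq> 0" "x < y" "0 < \<kappa> c y"
  shows "0 < \<kappa> c x"
proof (cases "0 < c \<and> x \<le> 0")
  case True
  then show ?thesis
    using \<kappa>_pos by blast
next
  case False
  have "0 \<le> c * s" if "x \<le> s" "s \<le> y" for s
  proof (cases "0 < c")
    case True
    with False that show ?thesis
      by simp
  next
    case False
    then have "y < 0"
      using assms \<kappa>_neg[of c y] by force
    with False that show ?thesis
      by (simp add: mult_nonpos_nonpos)
  qed
  then have "\<kappa> c y < \<kappa> c x"
    using \<kappa>_has_real_derivative \<kappa>_deriv_neg by (intro DERIV_neg_imp_decreasing[OF \<open>x < y\<close>]) blast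
  with assms show ?thesis
    by simp
qed

lemma continuous_on_Im_log_deriv: "continuous_on UNIV (\<lambda>t. Im (of_real c * m' t / (1 - of_real c * m t)))"
  using m_sq_ne_1 one_sub_mult_m_nonzero by (intro continuous_intros continuous_on_m) auto

lemma has_real_derivative_Im_Ln_one_sub_mult_m:
  "((\<lambda>s. Im (Ln (1 - of_real c * m s))) has_real_derivative - Im (of_real c * m' t / (1 - of_real c * m t))) (at t)"
proof -
  have "1 - of_real c * m t \<notin> \<real>\<^sub>\<le>\<^sub>0"
    using Im_m_neg[of t] by (cases "c = 0") (auto simp: complex_nonpos_Reals_iff)
  moreover have "((\<lambda>z. 1 - of_real c * msc z) has_field_derivative - of_real c * m' t) (at (Complex t \<eta>))"
    using has_field_derivative_m[of t] by (auto intro!: derivative_eq_intros)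
  ultimately have "((\<lambda>z. Ln (1 - of_real c * msc z)) has_field_derivative
      inverse (1 - of_real c * m t) * (- of_real c * m' t)) (at (Complex t \<eta>))"
    by (rule DERIV_chain2[OF has_field_derivative_Ln])
  from has_real_derivative_Im_horizontal[OF this] show ?thesis
    by (simp add: divide_inverse mult.commute)
qed

lemma
  shows sgn_mult_Im_Ln_one_sub_mult_m_nonneg: "0 \<le> sgn c * Im (Ln (1 - of_real c * m t))"
    and sgn_mult_Im_Ln_one_sub_mult_m_le_pi: "sgn c * Im (Ln (1 - of_real c * m t)) \<le> pi"
proof -
  have "Im (1 - of_real c * m t) = - c * Im (m t)"
    by simp
  then show "0 \<le> sgn c * Im (Ln (1 - of_real c * m t))" "sgn c * Im (Ln (1 - of_real c * m t)) \<le> pi"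
    using Im_Ln_pos_lt_imp[of "1 - of_real c * m t"] Im_Ln_neg[of "1 - of_real c * m t"] Im_m_neg[of t]
    by (cases "0 < c"; cases "c = 0"; force simp: mult_pos_neg mult_neg_neg)+
qed

lemma nn_integral_Im_log_deriv_le:
  assumes "c \<noteq> 0"
  shows "(\<integral>\<^sup>+t. ennreal \<bar>Im (of_real c * m' t / (1 - of_real c * m t))\<bar> \<partial>lborel) \<le> ennreal (2 * pi)"
proof -
  define F' where "F' t = - sgn c * Im (of_real c * m' t / (1 - of_real c * m t))" for t
  define P where "P t = \<bar>c\<bar> * - Im (m t) * \<rho> t / ((cmod ((m t)^2 - 1))^2 * (cmod (1 - of_real c * m t))^2)" for t
  have F'_eq: "F' t = P t * \<kappa> c t" for t
    unfolding F'_def Im_log_deriv_eq P_def by (cases "0 < c") (auto simp: assms sgn_if)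
  have P_pos: "0 < P t" for t
    unfolding P_def using assms Im_m_neg[of t] \<rho>_pos[of t] m_sq_ne_1[of t] one_sub_mult_m_nonzero[of c t]
    by (intro divide_pos_pos mult_pos_pos) auto
  have "(\<integral>\<^sup>+t. ennreal \<bar>F' t\<bar> \<partial>lborel) \<le> ennreal (2 * (pi - 0))"
  proof (rule nn_integral_abs_deriv_le_unimodal)
    show "((\<lambda>t. sgn c * Im (Ln (1 - of_real c * m t))) has_real_derivative F' t) (at t)" for t
      unfolding F'_def using DERIV_cmult[OF has_real_derivative_Im_Ln_one_sub_mult_m, of "sgn c"] by simp
    show "continuous_on UNIV F'"
      unfolding F'_def[abs_def] by (intro continuous_intros continuous_on_Im_log_deriv)
    show "0 < F' y \<Longrightarrow> 0 \<le> F' x" if "x < y" for x y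
      using \<kappa>_sign_change[OF assms that] P_pos[of x] P_pos[of y] by (simp add: F'_eq zero_less_mult_iff)
  qed (use sgn_mult_Im_Ln_one_sub_mult_m_nonneg sgn_mult_Im_Ln_one_sub_mult_m_le_pi in auto)
  moreover have "\<bar>F' t\<bar> = \<bar>Im (of_real c * m' t / (1 - of_real c * m t))\<bar>" for t
    unfolding F'_def using assms by (simp add: abs_mult)
  ultimately show ?thesis
    by simp
qed

lemma nn_integral_Im_Gfun_le_large:
  "(\<integral>\<^sup>+t. ennreal \<bar>Im (Gfun u (Complex t \<eta>))\<bar> \<partial>lborel) \<le> ennreal (4 * pi)"
proof (cases "u = 0")
  case True
  then show ?thesis
    by (simp add: Gfun_def)
next
  case False
  define f where "f c t = \<bar>Im (of_real c * m' t / (1 - of_real c * m t))\<bar>" for c t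
  have [measurable]: "f c \<in> borel_measurable borel" for c
    unfolding f_def[abs_def]
    by (intro borel_measurable_continuous_onI continuous_intros continuous_on_Im_log_deriv)
  have "(\<integral>\<^sup>+t. ennreal \<bar>Im (Gfun u (Complex t \<eta>))\<bar> \<partial>lborel)
      \<le> (\<integral>\<^sup>+t. ennreal (f u t) + ennreal (f (- u) t) \<partial>lborel)"
    unfolding Gfun_eq_sum f_def
    by (intro nn_integral_mono) (simp add: ennreal_plus[symmetric] del: ennreal_plus)
  also have "\<dots> = (\<integral>\<^sup>+t. ennreal (f u t) \<partial>lborel) + (\<integral>\<^sup>+t. ennreal (f (- u) t) \<partial>lborel)"
    by (rule nn_integral_add) measurable
  also have "\<dots> \<le> ennreal (2 * pi) + ennreal (2 * pi)"
    unfolding f_def using False by (intro add_mono nn_integral_Im_log_deriv_le) auto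
  also have "\<dots> = ennreal (4 * pi)"
    by (simp add: ennreal_plus[symmetric] del: ennreal_plus)
  finally show ?thesis .
qed

end

section \<open>Integration in \<open>E\<close>, \<open>F\<close> and \<open>u\<close>\<close>

definition Gfun_L1_bound :: "real \<Rightarrow> real" where
  "Gfun_L1_bound u = (if u < 1/2 then 18 * u^2 else 4 * pi)"

lemma Gfun_L1_bound_nonneg: "0 \<le> Gfun_L1_bound u"
  unfolding Gfun_L1_bound_def by simp

lemma nn_integral_abs_Im_Gfun_le:
  assumes "0 < \<eta>" "0 < u"
  shows "(\<integral>\<^sup>+E. ennreal \<bar>Im (Gfun u (Complex E \<eta>))\<bar> \<partial>lborel) \<le> ennreal (Gfun_L1_bound u)"
proof -
  interpret semicircle_line \<eta>
    using assms(1) by unfold_locales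
  show ?thesis
  proof (cases "u < 1/2")
    case True
    then have "u^2 < (1/2)^2"
      using assms(2) by (intro power_strict_mono) auto
    have "(\<integral>\<^sup>+E. ennreal \<bar>Im (Gfun u (Complex E \<eta>))\<bar> \<partial>lborel) \<le> ennreal (2 * u^2 / (1 - u^2) * (1 + pi))"
      using True assms(2) by (intro nn_integral_Im_Gfun_le_small) simp
    also have "\<dots> \<le> ennreal (18 * u^2)"
    proof (rule ennreal_leI)
      have "2 * (1 + pi) / (1 - u^2) \<le> 18"
        using \<open>u^2 < (1/2)^2\<close> pi_less_4 by (simp add: divide_le_eq power_divide)
      then have "2 * (1 + pi) / (1 - u^2) * u^2 \<le> 18 * u^2"
        by (rule mult_right_mono) simp
      then show "2 * u^2 / (1 - u^2) * (1 + pi) \<le> 18 * u^2"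
        by (simp add: algebra_simps)
    qed
    finally show ?thesis
      unfolding Gfun_L1_bound_def using True by simp
  next
    case False
    then show ?thesis
      using nn_integral_Im_Gfun_le_large[of u] unfolding Gfun_L1_bound_def by simp
  qed
qed

lemma borel_measurable_Im_Gfun:
  assumes "0 < \<eta>"
  shows "(\<lambda>E. Im (Gfun u (Complex E \<eta>))) \<in> borel_measurable borel"
  using semicircle_line.continuous_on_Im_Gfun[of \<eta> u] assms
  by (intro borel_measurable_continuous_onI) (simp add: semicircle_line_def)

lemma nn_integral_bcontfun_mult_Im_Gfun_le:
  fixes \<psi> :: "real \<Rightarrow>\<^sub>C real"
  assumes "0 < \<eta>" "0 < u"
  shows "(\<integral>\<^sup>+E. ennreal (\<bar>\<psi> E\<bar> * \<bar>Im (Gfun u (Complex E \<eta>))\<bar>) \<partial>lborel) \<le> ennreal (norm \<psi> * Gfun_L1_bound u)"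
proof -
  have "(\<integral>\<^sup>+E. ennreal (\<bar>\<psi> E\<bar> * \<bar>Im (Gfun u (Complex E \<eta>))\<bar>) \<partial>lborel)
      \<le> ennreal (norm \<psi>) * (\<integral>\<^sup>+E. ennreal \<bar>Im (Gfun u (Complex E \<eta>))\<bar> \<partial>lborel)"
    by (rule nn_integral_bcontfun_mult_le[OF borel_measurable_Im_Gfun[OF assms(1)]])
  also have "\<dots> \<le> ennreal (norm \<psi>) * ennreal (Gfun_L1_bound u)"
    by (rule mult_left_mono[OF nn_integral_abs_Im_Gfun_le[OF assms]]) simp
  also have "\<dots> = ennreal (norm \<psi> * Gfun_L1_bound u)"
    by (simp add: ennreal_mult Gfun_L1_bound_nonneg)
  finally show ?thesis .
qed

lemma Ifun_le_Gfun_L1_bound_sq: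
  assumes "0 < u"
  shows "Ifun \<psi> \<phi> u \<le> ennreal (norm \<psi> * norm \<phi> * (Gfun_L1_bound u)^2)"
  unfolding Ifun_def
proof (rule SUP_least, clarify)
  fix \<eta>1 \<eta>2 :: real
  assume "\<eta>1 \<in> {0<..1}" "\<eta>2 \<in> {0<..1}"
  then have "0 < \<eta>1" "0 < \<eta>2"
    by auto
  define f where "f E = ennreal (\<bar>\<psi> E\<bar> * \<bar>Im (Gfun u (Complex E \<eta>1))\<bar>)" for E
  define g where "g F = ennreal (\<bar>\<phi> F\<bar> * \<bar>Im (Gfun u (Complex F \<eta>2))\<bar>)" for F
  have [measurable]: "apply_bcontfun \<psi> \<in> borel_measurable borel" "apply_bcontfun \<phi> \<in> borel_measurable borel"
    by (auto intro: borel_measurable_continuous_onI)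
  have [measurable]: "f \<in> borel_measurable borel" "g \<in> borel_measurable borel"
    unfolding f_def[abs_def] g_def[abs_def]
    using borel_measurable_Im_Gfun[OF \<open>0 < \<eta>1\<close>] borel_measurable_Im_Gfun[OF \<open>0 < \<eta>2\<close>] by measurable
  have "(\<integral>\<^sup>+p. ennreal (\<bar>\<psi> (fst p)\<bar> * \<bar>\<phi> (snd p)\<bar> *
      \<bar>Im (Gfun u (Complex (fst p) \<eta>1)) * Im (Gfun u (Complex (snd p) \<eta>2))\<bar>) \<partial>lborel)
      = (\<integral>\<^sup>+p. f (fst p) * g (snd p) \<partial>lborel)"
    by (simp add: f_def g_def ennreal_mult[symmetric] abs_mult mult_ac)
  also have "\<dots> = (\<integral>\<^sup>+E. f E \<partial>lborel) * (\<integral>\<^sup>+F. g F \<partial>lborel)"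
    by (rule nn_integral_lborel_pair_mult) measurable
  also have "\<dots> \<le> ennreal (norm \<psi> * Gfun_L1_bound u) * ennreal (norm \<phi> * Gfun_L1_bound u)"
    unfolding f_def g_def using assms \<open>0 < \<eta>1\<close> \<open>0 < \<eta>2\<close>
    by (intro mult_mono nn_integral_bcontfun_mult_Im_Gfun_le) auto
  also have "\<dots> = ennreal (norm \<psi> * norm \<phi> * (Gfun_L1_bound u)^2)"
    using Gfun_L1_bound_nonneg by (simp add: ennreal_mult[symmetric] power2_eq_square mult_ac)
  finally show "(\<integral>\<^sup>+p. ennreal (\<bar>\<psi> (fst p)\<bar> * \<bar>\<phi> (snd p)\<bar> *
      \<bar>Im (Gfun u (Complex (fst p) (fst (\<eta>1, \<eta>2)))) * Im (Gfun u (Complex (snd p) (snd (\<eta>1, \<eta>2))))\<bar>) \<partial>lborel)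
      \<le> ennreal (norm \<psi> * norm \<phi> * (Gfun_L1_bound u)^2)"
    by simp
qed

lemma Gfun_L1_bound_sq_le: "(Gfun_L1_bound u)^2 \<le> 18^2 * (if u < 1/2 then u^4 else 1)"
proof (cases "u < 1/2")
  case True
  then show ?thesis
    unfolding Gfun_L1_bound_def by (simp add: power_mult_distrib flip: power_mult)
next
  case False
  have "(4 * pi)^2 \<le> 18^2"
    using pi_less_4 by (intro power_mono) auto
  with False show ?thesis
    unfolding Gfun_L1_bound_def by simp
qed

lemma borel_measurable_Gfun_L1_bound [measurable]: "Gfun_L1_bound \<in> borel_measurable borel"
  unfolding Gfun_L1_bound_def[abs_def] by measurable

text \<open>On \<open>u \<ge> 1/2\<close> the sharper constant \<open>(4 \<pi>)^2\<close> instead of \<open>18^2\<close> is needed to reach the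
  constant \<open>18^2 2^\<alpha> / (4 - \<alpha>)\<close> for \<open>\<alpha>\<close> close to 2.\<close>
lemma Gfun_L1_bound_sq_div_powr_le:
  "indicator {0<..} u * ennreal ((Gfun_L1_bound u)^2 / u powr (1 + \<alpha>))
    \<le> ennreal (18^2) * ennreal (indicator {0..1/2} u * u powr (3 - \<alpha>))
      + ennreal (16 * pi^2) * ennreal (indicator {1/2..} u * u powr (-1 - \<alpha>))"
proof (cases "0 < u")
  case True
  show ?thesis
  proof (cases "u < 1/2")
    case True
    with \<open>0 < u\<close> have "(Gfun_L1_bound u)^2 / u powr (1 + \<alpha>) = 18^2 * (u powr 4 / u powr (1 + \<alpha>))"
      unfolding Gfun_L1_bound_def by (simp add: power_mult_distrib flip: power_mult)
    also have "u powr 4 / u powr (1 + \<alpha>) = indicator {0..1/2} u * u powr (3 - \<alpha>)"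
    proof -
      have "3 - \<alpha> = 4 - (1 + \<alpha>)"
        by simp
      then show ?thesis
        using True \<open>0 < u\<close> by (simp only: powr_diff) simp
    qed
    finally show ?thesis
      using \<open>0 < u\<close> by (simp add: ennreal_mult' add_increasing2)
  next
    case False
    have "u powr (-1 - \<alpha>) = 1 / u powr (1 + \<alpha>)"
      using powr_minus_divide[of u "1 + \<alpha>"] by simp
    with False have "(Gfun_L1_bound u)^2 / u powr (1 + \<alpha>) = 16 * pi^2 * (indicator {1/2..} u * u powr (-1 - \<alpha>))"
      unfolding Gfun_L1_bound_def by (simp add: power_mult_distrib)
    then show ?thesis
      using \<open>0 < u\<close> by (simp add: ennreal_mult' add_increasing)
  qed
qed simp

lemma split_powr_integrals_le:
  assumes "2 < \<alpha>" "\<alpha> < 4"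
  shows "18^2 * ((1/2) powr (4 - \<alpha>) / (4 - \<alpha>)) + 16 * pi^2 * ((1/2) powr (- \<alpha>) / \<alpha>)
    \<le> 18^2 * 2 powr \<alpha> / (4 - \<alpha>)"
proof -
  define P y z where "P = 2 powr \<alpha>" and "y = 1 / (4 - \<alpha>)" and "z = 1 / \<alpha>"
  have "0 < P" "0 < y" "0 < z"
    unfolding P_def y_def z_def using assms by auto
  have "16 * pi^2 \<le> 256"
    using pi_less_4 power_mono[of pi 4 2] by simp
  moreover have "z \<le> y"
    unfolding y_def z_def using assms by (intro divide_left_mono) auto
  ultimately have "16 * pi^2 * z \<le> 256 * y"
    using \<open>0 < z\<close> by (intro mult_mono) auto
  then have "16 * pi^2 * (P * z) \<le> 256 * (P * y)"
    using mult_left_mono[of _ _ P] \<open>0 < P\<close> by (simp add: algebra_simps)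
  moreover have "0 < P * y"
    using \<open>0 < P\<close> \<open>0 < y\<close> by simp
  moreover have "18^2 * (a / 16) + b \<le> 18^2 * a" if "b \<le> 256 * a" "0 < a" for a b :: real
    using that by simp
  ultimately have "18^2 * (P * y / 16) + 16 * pi^2 * (P * z) \<le> 18^2 * (P * y)"
    by blast
  moreover have "(1/2) powr (4 - \<alpha>) / (4 - \<alpha>) = P * y / 16" "(1/2) powr (- \<alpha>) / \<alpha> = P * z"
    unfolding P_def y_def z_def by (simp_all add: powr_divide powr_diff powr_minus_divide)
  ultimately show ?thesis
    unfolding P_def y_def by simp
qed

lemma nn_integral_Gfun_L1_bound_sq_weighted:
  assumes "2 < \<alpha>" "\<alpha> < 4"
  shows "(\<integral>\<^sup>+u. indicator {0<..} u * ennreal ((Gfun_L1_bound u)^2 / u powr (1 + \<alpha>)) \<partial>lborel)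
    \<le> ennreal (18^2 * 2 powr \<alpha> / (4 - \<alpha>))"
proof -
  have "(\<integral>\<^sup>+u. indicator {0<..} u * ennreal ((Gfun_L1_bound u)^2 / u powr (1 + \<alpha>)) \<partial>lborel)
      \<le> (\<integral>\<^sup>+u. ennreal (18^2) * ennreal (indicator {0..1/2} u * u powr (3 - \<alpha>))
          + ennreal (16 * pi^2) * ennreal (indicator {1/2..} u * u powr (-1 - \<alpha>)) \<partial>lborel)"
    by (intro nn_integral_mono Gfun_L1_bound_sq_div_powr_le)
  also have "\<dots> = ennreal (18^2) * ennreal ((1/2) powr (4 - \<alpha>) / (4 - \<alpha>))
      + ennreal (16 * pi^2) * ennreal ((1/2) powr (- \<alpha>) / \<alpha>)"
    using nn_integral_powr_Icc_0[of "3 - \<alpha>" "1/2"] nn_integral_powr_atLeast[of "-1 - \<alpha>" "1/2"] assms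
    by (simp add: nn_integral_add nn_integral_cmult del: ennreal_numeral)
  also have "\<dots> = ennreal (18^2 * ((1/2) powr (4 - \<alpha>) / (4 - \<alpha>)) + 16 * pi^2 * ((1/2) powr (- \<alpha>) / \<alpha>))"
    using assms by (simp add: ennreal_mult[symmetric] ennreal_plus[symmetric] del: ennreal_plus ennreal_numeral)
  also have "\<dots> \<le> ennreal (18^2 * 2 powr \<alpha> / (4 - \<alpha>))"
    by (rule ennreal_leI split_powr_integrals_le[OF assms])+
  finally show ?thesis .
qed

lemma Ifun_weighted_le:
  "indicator {0<..} u * (ennreal (1 / u powr (1 + \<alpha>)) * Ifun \<psi> \<phi> u)
    \<le> ennreal (norm \<psi> * norm \<phi>) * (indicator {0<..} u * ennreal ((Gfun_L1_bound u)^2 / u powr (1 + \<alpha>)))"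
proof (cases "0 < u")
  case True
  have "ennreal (1 / u powr (1 + \<alpha>)) * Ifun \<psi> \<phi> u
      \<le> ennreal (1 / u powr (1 + \<alpha>)) * ennreal (norm \<psi> * norm \<phi> * (Gfun_L1_bound u)^2)"
    using Ifun_le_Gfun_L1_bound_sq[OF True] by (rule mult_left_mono) simp
  also have "\<dots> = ennreal (norm \<psi> * norm \<phi>) * ennreal ((Gfun_L1_bound u)^2 / u powr (1 + \<alpha>))"
    by (simp add: ennreal_mult[symmetric] mult.commute)
  finally show ?thesis
    using True by simp
qed simp

theorem lemma5p4:
  fixes \<alpha> :: real and \<psi> \<phi> :: "real \<Rightarrow>\<^sub>C real"
  assumes "2 < \<alpha>" and "\<alpha> < 4"
  shows "(\<forall>u>0. Ifun \<psi> \<phi> u \<le>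
            ennreal (18^2 * norm \<psi> * norm \<phi> * (if u < 1/2 then u^4 else 1)))
       \<and> (\<integral>\<^sup>+ u. indicator {0<..} u * (ennreal (1 / u powr (1 + \<alpha>)) * Ifun \<psi> \<phi> u) \<partial>lborel)
            \<le> ennreal (18^2 * 2 powr \<alpha> / (4 - \<alpha>) * norm \<psi> * norm \<phi>)"
proof (intro conjI allI impI)
  fix u :: real
  assume "0 < u"
  then have "Ifun \<psi> \<phi> u \<le> ennreal (norm \<psi> * norm \<phi> * (Gfun_L1_bound u)^2)"
    by (rule Ifun_le_Gfun_L1_bound_sq)
  also have "\<dots> \<le> ennreal (norm \<psi> * norm \<phi> * (18^2 * (if u < 1/2 then u^4 else 1)))"
    by (intro ennreal_leI mult_left_mono Gfun_L1_bound_sq_le) simp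
  finally show "Ifun \<psi> \<phi> u \<le> ennreal (18^2 * norm \<psi> * norm \<phi> * (if u < 1/2 then u^4 else 1))"
    by (simp add: mult_ac)
next
  have "(\<integral>\<^sup>+u. indicator {0<..} u * (ennreal (1 / u powr (1 + \<alpha>)) * Ifun \<psi> \<phi> u) \<partial>lborel)
      \<le> (\<integral>\<^sup>+u. ennreal (norm \<psi> * norm \<phi>) *
          (indicator {0<..} u * ennreal ((Gfun_L1_bound u)^2 / u powr (1 + \<alpha>))) \<partial>lborel)"
    by (intro nn_integral_mono Ifun_weighted_le)
  also have "\<dots> = ennreal (norm \<psi> * norm \<phi>) *
      (\<integral>\<^sup>+u. indicator {0<..} u * ennreal ((Gfun_L1_bound u)^2 / u powr (1 + \<alpha>)) \<partial>lborel)"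
    by (rule nn_integral_cmult) measurable
  also have "\<dots> \<le> ennreal (norm \<psi> * norm \<phi>) * ennreal (18^2 * 2 powr \<alpha> / (4 - \<alpha>))"
    using nn_integral_Gfun_L1_bound_sq_weighted[OF assms] by (rule mult_left_mono) simp
  also have "\<dots> = ennreal (18^2 * 2 powr \<alpha> / (4 - \<alpha>) * norm \<psi> * norm \<phi>)"
    using assms by (simp add: ennreal_mult[symmetric] mult_ac)
  finally show "(\<integral>\<^sup>+ u. indicator {0<..} u * (ennreal (1 / u powr (1 + \<alpha>)) * Ifun \<psi> \<phi> u) \<partial>lborel)
      \<le> ennreal (18^2 * 2 powr \<alpha> / (4 - \<alpha>) * norm \<psi> * norm \<phi>)" .
qed

end
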